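(* Let $B\to A$ be a flat finite type morphism of Noetherian rings, $t\in B$ a non-zero-divisor, $I\subseteq A$ an ideal, and $A=B[z_1,\dots,z_n]/(f_1,\dots,f_m)$ a presentation. Let $B\to A'$ be a flat morphism of Noetherian rings, $I'\subseteq A'$ an ideal, $k\ge1$, and $\varphi:A/t^kI\to A'/t^kI'$ an isomorphism of $B$-algebras. For each $i$ let $\hat z_i\in A'$ be a lift of the image of $z_i$ under $A\to A/t^kI\xrightarrow{\varphi}A'/t^kI'$. Then the homomorphism $\widehat{B[z_1,\dots,z_n]}\to\widehat{A'}$, $z_i\mapsto\hat z_i$, is surjective, where $\widehat{\ }$ denotes $t$-adic completion. *)

theory Defs
  imports Main "HOL-Library.Poly_Mapping"
begin

definition is_ring_hom :: "('a::comm_ring_1 \<Rightarrow> 'b::comm_ring_1) \<Rightarrow> bool" where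
  "is_ring_hom h \<longleftrightarrow> h 1 = 1 \<and> (\<forall>x y. h (x + y) = h x + h y \<and> h (x * y) = h x * h y)"

definition is_ideal :: "'a::comm_ring_1 set \<Rightarrow> bool" where
  "is_ideal I \<longleftrightarrow> 0 \<in> I \<and> (\<forall>x\<in>I. \<forall>y\<in>I. x + y \<in> I) \<and> (\<forall>x\<in>I. \<forall>r. r * x \<in> I)"

definition ideal_gen :: "'a::comm_ring_1 set \<Rightarrow> 'a set" where
  "ideal_gen S = \<Inter>{I. is_ideal I \<and> S \<subseteq> I}"

definition noetherian_ring :: "'a::comm_ring_1 itself \<Rightarrow> bool" where
  "noetherian_ring _ \<longleftrightarrow> (\<forall>I::'a set. is_ideal I \<longrightarrow> (\<exists>F. finite F \<and> I = ideal_gen F))"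

definition non_zero_divisor :: "'a::comm_ring_1 \<Rightarrow> bool" where
  "non_zero_divisor t \<longleftrightarrow> (\<forall>x. t * x = 0 \<longrightarrow> x = 0)"

definition subalg_gen :: "('b::comm_ring_1 \<Rightarrow> 'a::comm_ring_1) \<Rightarrow> 'a set \<Rightarrow> 'a set" where
  "subalg_gen f S = \<Inter>{T. range f \<subseteq> T \<and> S \<subseteq> T \<and>
      (\<forall>x\<in>T. \<forall>y\<in>T. x + y \<in> T \<and> x * y \<in> T \<and> - x \<in> T)}"

definition finite_type :: "('b::comm_ring_1 \<Rightarrow> 'a::comm_ring_1) \<Rightarrow> bool" where
  "finite_type f \<longleftrightarrow> (\<exists>S. finite S \<and> subalg_gen f S = UNIV)"

text \<open>Tensor product J \<otimes>_B A of an ideal J of B with the B-module A (via f):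
  the free abelian group on J \<times> A modulo the bilinearity / balancing relations.
  A formal sum is zero in the tensor product iff it lies in the subgroup generated
  by the relations.\<close>

definition zspan :: "'x::ab_group_add set \<Rightarrow> 'x set" where
  "zspan S = \<Inter>{G. 0 \<in> G \<and> S \<subseteq> G \<and> (\<forall>x\<in>G. \<forall>y\<in>G. x - y \<in> G)}"

definition tensor_rels ::
  "('b::comm_ring_1 \<Rightarrow> 'a::comm_ring_1) \<Rightarrow> 'b set \<Rightarrow> (('b \<times> 'a) \<Rightarrow>\<^sub>0 int) set" where
  "tensor_rels f J =
     {Poly_Mapping.single (j + j', a) 1 - Poly_Mapping.single (j, a) 1 - Poly_Mapping.single (j', a) 1
        | j j' a. j \<in> J \<and> j' \<in> J}
   \<union> {Poly_Mapping.single (j, a + a') 1 - Poly_Mapping.single (j, a) 1 - Poly_Mapping.single (j, a') 1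
        | j a a'. j \<in> J}
   \<union> {Poly_Mapping.single (b * j, a) 1 - Poly_Mapping.single (j, f b * a) 1
        | b j a. j \<in> J}"

text \<open>Flatness of f : B -> A: for every ideal J of B the natural map
  J \<otimes>_B A -> A, j \<otimes> a \<mapsto> f j * a, is injective.\<close>
definition flat_hom :: "('b::comm_ring_1 \<Rightarrow> 'a::comm_ring_1) \<Rightarrow> bool" where
  "flat_hom f \<longleftrightarrow> (\<forall>J. is_ideal J \<longrightarrow>
     (\<forall>u :: ('b \<times> 'a) \<Rightarrow>\<^sub>0 int. Poly_Mapping.keys u \<subseteq> J \<times> UNIV \<longrightarrow>
        (\<Sum>p\<in>Poly_Mapping.keys u. of_int (Poly_Mapping.lookup u p) * (f (fst p) * snd p)) = 0 \<longrightarrow>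
        u \<in> zspan (tensor_rels f J)))"

text \<open>Polynomials over B in variables indexed by nat; B[z_0,...,z_{n-1}] is the
  subring of polynomials only involving variables < n.\<close>
type_synonym 'b mpoly = "(nat \<Rightarrow>\<^sub>0 nat) \<Rightarrow>\<^sub>0 'b"

definition polys_in :: "nat \<Rightarrow> 'b::comm_ring_1 mpoly set" where
  "polys_in n = {p. \<forall>mo\<in>Poly_Mapping.keys p. Poly_Mapping.keys mo \<subseteq> {..<n}}"

definition pconst :: "'b::comm_ring_1 \<Rightarrow> 'b mpoly" where
  "pconst b = Poly_Mapping.single 0 b"

definition pvar :: "nat \<Rightarrow> 'b::comm_ring_1 mpoly" where
  "pvar i = Poly_Mapping.single (Poly_Mapping.single i 1) 1"

definition peval :: "('b::comm_ring_1 \<Rightarrow> 'a::comm_ring_1) \<Rightarrow> (nat \<Rightarrow> 'a) \<Rightarrow> 'b mpoly \<Rightarrow> 'a" where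
  "peval h a p = (\<Sum>mo\<in>Poly_Mapping.keys p.
       h (Poly_Mapping.lookup p mo) * (\<Prod>i\<in>Poly_Mapping.keys mo. a i ^ Poly_Mapping.lookup mo i))"

text \<open>A = B[z_1..z_n]/(f_1..f_m) via z_i \<mapsto> a i: evaluation is surjective onto A
  with kernel the ideal of B[z_1..z_n] generated by f_1..f_m.\<close>
definition is_presentation ::
  "('b::comm_ring_1 \<Rightarrow> 'a::comm_ring_1) \<Rightarrow> nat \<Rightarrow> (nat \<Rightarrow> 'a) \<Rightarrow> nat \<Rightarrow> (nat \<Rightarrow> 'b mpoly) \<Rightarrow> bool" where
  "is_presentation f n a m fs \<longleftrightarrow>
     (\<forall>i<m. fs i \<in> polys_in n) \<and>
     (\<forall>x. \<exists>p\<in>polys_in n. peval f a p = x) \<and>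
     (\<forall>p\<in>polys_in n. peval f a p = 0 \<longleftrightarrow>
        (\<exists>r. (\<forall>i<m. r i \<in> polys_in n) \<and> p = (\<Sum>i<m. r i * fs i)))"

text \<open>phi : A -> A' induces an isomorphism of B-algebras A/J -> A'/J'
  (J, J' ideals), described on representatives.\<close>
definition quot_iso ::
  "('b::comm_ring_1 \<Rightarrow> 'a::comm_ring_1) \<Rightarrow> ('b \<Rightarrow> 'c::comm_ring_1) \<Rightarrow> 'a set \<Rightarrow> 'c set \<Rightarrow> ('a \<Rightarrow> 'c) \<Rightarrow> bool" where
  "quot_iso f g J J' phi \<longleftrightarrow>
     (\<forall>x y. x - y \<in> J \<longrightarrow> phi x - phi y \<in> J') \<and>
     (\<forall>x y. phi (x + y) - (phi x + phi y) \<in> J') \<and>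
     (\<forall>x y. phi (x * y) - phi x * phi y \<in> J') \<and>
     phi 1 - 1 \<in> J' \<and>
     (\<forall>b. phi (f b) - g b \<in> J') \<and>
     (\<forall>x. phi x \<in> J' \<longrightarrow> x \<in> J) \<and>
     (\<forall>c. \<exists>x. c - phi x \<in> J')"

text \<open>Elements of the s-adic completion of a ring with carrier P: compatible families
  (x_j mod s^j) with x_{j+1} \<equiv> x_j mod s^j P.\<close>
definition adic_compatible :: "'r::comm_ring_1 set \<Rightarrow> 'r \<Rightarrow> (nat \<Rightarrow> 'r) \<Rightarrow> bool" where
  "adic_compatible P s x \<longleftrightarrow> (\<forall>j. x j \<in> P \<and> (\<exists>q\<in>P. x (Suc j) - x j = s ^ j * q))"

definition completion_map_surj ::
  "('b::comm_ring_1 \<Rightarrow> 'c::comm_ring_1) \<Rightarrow> 'b \<Rightarrow> nat \<Rightarrow> (nat \<Rightarrow> 'c) \<Rightarrow> bool" where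
  "completion_map_surj g t n zh \<longleftrightarrow>
     (\<forall>y. adic_compatible UNIV (g t) y \<longrightarrow>
        (\<exists>x. adic_compatible (polys_in n) (pconst t) x \<and>
             (\<forall>j. \<exists>c. peval g zh (x j) - y j = g t ^ j * c)))"

end

theory Submission
  imports Defs
begin

text \<open>Since \<open>k \<ge> 1\<close>, the map \<open>\<phi>\<close>, read modulo \<open>t\<close>, is a ring homomorphism
  \<open>A \<rightarrow> A'/tA'\<close> compatible with the structure maps, sending \<open>z\<^sub>i\<close> to the class of \<open>\<hat>z\<^sub>i\<close>.
  Hence it sends the value of a polynomial at the \<open>z\<^sub>i\<close> to its value at the \<open>\<hat>z\<^sub>i\<close>; since
  the \<open>z\<^sub>i\<close> generate \<open>A\<close> and \<open>\<phi>\<close> is onto modulo \<open>t\<close>, evaluation at the \<open>\<hat>z\<^sub>i\<close> is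
  onto modulo \<open>t\<close>. A map onto modulo \<open>t\<close> is onto on \<open>t\<close>-adic completions: a compatible
  family \<open>(y\<^sub>j)\<close> is matched one power of \<open>t\<close> at a time, correcting the \<open>j\<close>-th approximant by
  \<open>t\<^sup>j q\<^sub>j\<close>.\<close>

lemma lookup_pconst_mult:
  "Poly_Mapping.lookup (pconst c * p) mo = c * Poly_Mapping.lookup p mo"
  by (simp add: pconst_def mult_map_scale_conv_mult[symmetric] Poly_Mapping.map.rep_eq when_def)

lemma keys_pconst_mult: "Poly_Mapping.keys (pconst c * p) \<subseteq> Poly_Mapping.keys p"
  by (auto simp: in_keys_iff lookup_pconst_mult)

lemma pconst_power: "pconst c ^ j = pconst (c ^ j)"
  by (induct j) (simp_all add: pconst_def mult_single)

lemma polys_in_add: "p \<in> polys_in n \<Longrightarrow> q \<in> polys_in n \<Longrightarrow> p + q \<in> polys_in n"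
  using keys_add[of p q] unfolding polys_in_def by blast

lemma polys_in_pconst_mult: "p \<in> polys_in n \<Longrightarrow> pconst c * p \<in> polys_in n"
  using keys_pconst_mult[of c p] unfolding polys_in_def by blast

lemma ring_hom_zero: "is_ring_hom h \<Longrightarrow> h 0 = 0"
  unfolding is_ring_hom_def by (metis add_cancel_right_right add_0)

lemma ring_hom_power: "is_ring_hom h \<Longrightarrow> h (x ^ j) = h x ^ j"
  by (induct j) (auto simp: is_ring_hom_def)

lemma peval_eq_sum_superset:
  assumes "is_ring_hom h" "finite S" "Poly_Mapping.keys p \<subseteq> S"
  shows "peval h a p = (\<Sum>mo\<in>S. h (Poly_Mapping.lookup p mo) *
           (\<Prod>i\<in>Poly_Mapping.keys mo. a i ^ Poly_Mapping.lookup mo i))"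
  unfolding peval_def
  by (rule sum.mono_neutral_left) (use assms ring_hom_zero[OF assms(1)] in \<open>auto simp: in_keys_iff\<close>)

lemma peval_add:
  assumes "is_ring_hom h"
  shows "peval h a (p + q) = peval h a p + peval h a q"
proof -
  let ?S = "Poly_Mapping.keys p \<union> Poly_Mapping.keys q"
  note sum_S = peval_eq_sum_superset[OF assms, of ?S]
  have "peval h a (p + q) = (\<Sum>mo\<in>?S. h (Poly_Mapping.lookup (p + q) mo) *
           (\<Prod>i\<in>Poly_Mapping.keys mo. a i ^ Poly_Mapping.lookup mo i))"
    by (rule peval_eq_sum_superset[OF assms _ keys_add]) simp
  also have "\<dots> = peval h a p + peval h a q"
    using assms by (simp add: sum_S lookup_add is_ring_hom_def distrib_right sum.distrib)
  finally show ?thesis .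
qed

lemma peval_pconst_mult:
  assumes "is_ring_hom h"
  shows "peval h a (pconst c * p) = h c * peval h a p"
proof -
  have "peval h a (pconst c * p) = (\<Sum>mo\<in>Poly_Mapping.keys p. h (Poly_Mapping.lookup (pconst c * p) mo) *
           (\<Prod>i\<in>Poly_Mapping.keys mo. a i ^ Poly_Mapping.lookup mo i))"
    by (rule peval_eq_sum_superset[OF assms _ keys_pconst_mult]) simp
  also have "\<dots> = h c * peval h a p"
    using assms by (simp add: lookup_pconst_mult is_ring_hom_def peval_def sum_distrib_left mult.assoc)
  finally show ?thesis .
qed

lemma dvd_diff_trans: "s dvd a - b \<Longrightarrow> s dvd b - c \<Longrightarrow> s dvd a - (c::'a::comm_ring_1)"
  using dvd_add[of s "a - b" "b - c"] by simp

lemma dvd_diff_add_cong: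
  "s dvd a - b \<Longrightarrow> s dvd c - d \<Longrightarrow> s dvd (a + c) - (b + (d::'a::comm_ring_1))"
  using dvd_add[of s "a - b" "c - d"] by (simp add: algebra_simps)

lemma dvd_diff_mult_cong:
  assumes "s dvd a - b" "s dvd c - (d::'a::comm_ring_1)"
  shows "s dvd a * c - b * d"
proof -
  have "a * c - b * d = a * (c - d) + (a - b) * d" by (simp add: algebra_simps)
  then show ?thesis using assms by (simp add: dvd_add)
qed

lemma dvd_diff_sum_cong:
  "(\<And>x. x \<in> A \<Longrightarrow> s dvd F x - G x) \<Longrightarrow> s dvd sum F A - (sum G A :: 'a::comm_ring_1)"
  by (simp add: dvd_sum flip: sum_subtractf)

lemma dvd_diff_prod_cong:
  "(\<And>x. x \<in> A \<Longrightarrow> s dvd F x - G x) \<Longrightarrow> s dvd prod F A - (prod G A :: 'a::comm_ring_1)"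
  by (induct A rule: infinite_finite_induct) (simp_all add: dvd_diff_mult_cong)

lemma dvd_diff_power_cong: "s dvd a - b \<Longrightarrow> s dvd a ^ j - (b ^ j :: 'a::comm_ring_1)"
  by (induct j) (simp_all add: dvd_diff_mult_cong)

definition ring_hom_mod :: "'c::comm_ring_1 \<Rightarrow> ('a::comm_ring_1 \<Rightarrow> 'c) \<Rightarrow> bool" where
  "ring_hom_mod s phi \<longleftrightarrow> s dvd phi 1 - 1 \<and>
     (\<forall>x y. s dvd phi (x + y) - (phi x + phi y) \<and> s dvd phi (x * y) - phi x * phi y)"

lemma ring_hom_mod_zero:
  assumes "ring_hom_mod s phi"
  shows "s dvd phi 0"
proof -
  have "phi 0 = - (phi (0 + 0) - (phi 0 + phi 0))" by simp
  then show ?thesis using assms unfolding ring_hom_mod_def by (metis dvd_minus_iff)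
qed

lemma ring_hom_mod_sum:
  assumes "ring_hom_mod s phi"
  shows "s dvd phi (sum F A) - (\<Sum>x\<in>A. phi (F x))"
proof (induct A rule: infinite_finite_induct)
  case (insert x A)
  have "s dvd phi (F x + sum F A) - (phi (F x) + phi (sum F A))"
    using assms unfolding ring_hom_mod_def by blast
  moreover have "s dvd (phi (F x) + phi (sum F A)) - (phi (F x) + (\<Sum>x\<in>A. phi (F x)))"
    using insert.hyps(3) by (simp add: dvd_diff_add_cong)
  ultimately show ?case
    using insert.hyps by (simp add: dvd_diff_trans)
qed (simp_all add: ring_hom_mod_zero[OF assms])

lemma ring_hom_mod_prod:
  assumes "ring_hom_mod s phi"
  shows "s dvd phi (prod F A) - (\<Prod>x\<in>A. phi (F x))"
proof (induct A rule: infinite_finite_induct)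
  case (insert x A)
  have "s dvd phi (F x * prod F A) - phi (F x) * phi (prod F A)"
    using assms unfolding ring_hom_mod_def by blast
  moreover have "s dvd phi (F x) * phi (prod F A) - phi (F x) * (\<Prod>x\<in>A. phi (F x))"
    using insert.hyps(3) by (simp add: dvd_diff_mult_cong)
  ultimately show ?case
    using insert.hyps by (simp add: dvd_diff_trans)
qed (use assms in \<open>simp_all add: ring_hom_mod_def\<close>)

lemma ring_hom_mod_power:
  assumes "ring_hom_mod s phi"
  shows "s dvd phi (x ^ j) - phi x ^ j"
  using ring_hom_mod_prod[OF assms, of "\<lambda>_. x" "{..<j}"] by simp

lemma peval_ring_hom_mod:
  assumes phi: "ring_hom_mod s phi"
    and coeff: "\<And>b. s dvd phi (f b) - g b"
    and var: "\<And>i. i < n \<Longrightarrow> s dvd phi (z i) - zh i"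
    and p: "p \<in> polys_in n"
  shows "s dvd phi (peval f z p) - peval g zh p"
proof -
  have monomial: "s dvd phi (f (Poly_Mapping.lookup p mo) * (\<Prod>i\<in>Poly_Mapping.keys mo. z i ^ Poly_Mapping.lookup mo i))
      - g (Poly_Mapping.lookup p mo) * (\<Prod>i\<in>Poly_Mapping.keys mo. zh i ^ Poly_Mapping.lookup mo i)"
    if "mo \<in> Poly_Mapping.keys p" for mo
  proof -
    let ?c = "Poly_Mapping.lookup p mo" and ?e = "Poly_Mapping.lookup mo"
    have vars: "Poly_Mapping.keys mo \<subseteq> {..<n}" using p that unfolding polys_in_def by blast
    have "s dvd phi (\<Prod>i\<in>Poly_Mapping.keys mo. z i ^ ?e i) - (\<Prod>i\<in>Poly_Mapping.keys mo. phi (z i ^ ?e i))"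
      by (rule ring_hom_mod_prod[OF phi])
    moreover have "s dvd (\<Prod>i\<in>Poly_Mapping.keys mo. phi (z i ^ ?e i)) - (\<Prod>i\<in>Poly_Mapping.keys mo. zh i ^ ?e i)"
      using vars by (intro dvd_diff_prod_cong dvd_diff_trans[OF ring_hom_mod_power[OF phi]]
          dvd_diff_power_cong var) auto
    ultimately have "s dvd phi (f ?c) * phi (\<Prod>i\<in>Poly_Mapping.keys mo. z i ^ ?e i)
        - g ?c * (\<Prod>i\<in>Poly_Mapping.keys mo. zh i ^ ?e i)"
      by (intro dvd_diff_mult_cong coeff) (rule dvd_diff_trans)
    moreover have "s dvd phi (f ?c * (\<Prod>i\<in>Poly_Mapping.keys mo. z i ^ ?e i))
        - phi (f ?c) * phi (\<Prod>i\<in>Poly_Mapping.keys mo. z i ^ ?e i)"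
      using phi unfolding ring_hom_mod_def by blast
    ultimately show ?thesis by (rule dvd_diff_trans[rotated])
  qed
  show ?thesis
    unfolding peval_def
    by (rule dvd_diff_trans[OF ring_hom_mod_sum[OF phi] dvd_diff_sum_cong[OF monomial]])
qed

lemma adic_lift_step:
  assumes g: "is_ring_hom g"
    and surj_mod: "\<And>d. \<exists>q\<in>polys_in n. g t dvd d - peval g zh q"
    and y: "adic_compatible UNIV (g t) y"
    and p: "g t ^ j dvd peval g zh p - y j"
  shows "\<exists>q\<in>polys_in n. g t ^ Suc j dvd peval g zh (p + pconst t ^ j * q) - y (Suc j)"
proof -
  obtain c where c: "peval g zh p - y j = g t ^ j * c" using p by blast
  obtain c' where c': "y (Suc j) - y j = g t ^ j * c'" using y unfolding adic_compatible_def by blast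
  obtain q where q: "q \<in> polys_in n" and "g t dvd (c' - c) - peval g zh q" using surj_mod by blast
  then obtain e where e: "(c' - c) - peval g zh q = g t * e" by blast
  have "peval g zh (p + pconst t ^ j * q) - y (Suc j)
      = (peval g zh p - y j) - (y (Suc j) - y j) + g t ^ j * peval g zh q"
    by (simp add: pconst_power peval_add[OF g] peval_pconst_mult[OF g] ring_hom_power[OF g])
  also have "\<dots> = g t ^ Suc j * - e"
    using c c' e by (simp add: algebra_simps)
  finally show ?thesis using q by (metis dvdI)
qed

lemma completion_map_surj_if_surj_mod:
  assumes g: "is_ring_hom g"
    and surj_mod: "\<And>d. \<exists>q\<in>polys_in n. g t dvd d - peval g zh q"
  shows "completion_map_surj g t n zh"
  unfolding completion_map_surj_def
proof (intro allI impI)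
  fix y assume y: "adic_compatible UNIV (g t) y"
  obtain Q where Q: "\<And>j p. g t ^ j dvd peval g zh p - y j \<Longrightarrow>
      Q j p \<in> polys_in n \<and> g t ^ Suc j dvd peval g zh (p + pconst t ^ j * Q j p) - y (Suc j)"
    using adic_lift_step[OF g surj_mod y] by metis
  define x where "x = rec_nat 0 (\<lambda>j p. p + pconst t ^ j * Q j p)"
  have x_Suc: "x (Suc j) = x j + pconst t ^ j * Q j (x j)" for j
    unfolding x_def by simp
  have x_approx: "x j \<in> polys_in n \<and> g t ^ j dvd peval g zh (x j) - y j" for j
  proof (induct j)
    case 0
    show ?case by (simp add: x_def polys_in_def)
  next
    case (Suc j)
    then show ?case
      using Q[of j "x j"] by (simp add: x_Suc polys_in_add polys_in_pconst_mult pconst_power)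
  qed
  have "adic_compatible (polys_in n) (pconst t) x"
    unfolding adic_compatible_def using x_approx Q by (auto simp: x_Suc)
  moreover have "\<forall>j. \<exists>c. peval g zh (x j) - y j = g t ^ j * c"
    using x_approx by (auto elim: dvdE)
  ultimately show "\<exists>x. adic_compatible (polys_in n) (pconst t) x \<and> (\<forall>j. \<exists>c. peval g zh (x j) - y j = g t ^ j * c)"
    by blast
qed

theorem mainTheorem8:
  fixes f :: "'b::comm_ring_1 \<Rightarrow> 'a::comm_ring_1"
    and g :: "'b \<Rightarrow> 'c::comm_ring_1"
    and t :: 'b
    and I :: "'a set" and I' :: "'c set"
    and n m k :: nat
    and z :: "nat \<Rightarrow> 'a" and fs :: "nat \<Rightarrow> 'b mpoly"
    and phi :: "'a \<Rightarrow> 'c" and zh :: "nat \<Rightarrow> 'c"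
  assumes "noetherian_ring TYPE('b)" and "noetherian_ring TYPE('a)" and "noetherian_ring TYPE('c)"
    and "is_ring_hom f" and "flat_hom f" and "finite_type f"
    and "non_zero_divisor t"
    and "is_ideal I"
    and "is_presentation f n z m fs"
    and "is_ring_hom g" and "flat_hom g"
    and "is_ideal I'"
    and "k \<ge> 1"
    and "quot_iso f g ((\<lambda>x. f t ^ k * x) ` I) ((\<lambda>x. g t ^ k * x) ` I') phi"
    and "\<forall>i<n. zh i - phi (z i) \<in> (\<lambda>x. g t ^ k * x) ` I'"
  shows "completion_map_surj g t n zh"
proof (rule completion_map_surj_if_surj_mod[OF \<open>is_ring_hom g\<close>])
  have mod_t: "g t dvd a - b" if "a - b \<in> (\<lambda>x. g t ^ k * x) ` I'" for a b
  proof -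
    from that obtain c where "a - b = g t ^ k * c" by blast
    moreover have "g t dvd g t ^ k" using \<open>k \<ge> 1\<close> by (simp add: dvd_power)
    ultimately show ?thesis by (simp add: dvd_mult2)
  qed
  note iso = \<open>quot_iso f g _ _ phi\<close>[unfolded quot_iso_def]
  have phi: "ring_hom_mod (g t) phi"
    unfolding ring_hom_mod_def using iso by (simp add: mod_t)
  have coeff: "g t dvd phi (f b) - g b" for b
    using iso by (simp add: mod_t)
  have var: "g t dvd phi (z i) - zh i" if "i < n" for i
    using mod_t[of "zh i" "phi (z i)"] assms(15) that by (metis dvd_minus_iff minus_diff_eq)
  fix d
  obtain x where x: "g t dvd d - phi x" using iso mod_t by meson
  obtain p where p: "p \<in> polys_in n" "peval f z p = x"
    using \<open>is_presentation f n z m fs\<close> unfolding is_presentation_def by blast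
  have "g t dvd phi (peval f z p) - peval g zh p"
    by (rule peval_ring_hom_mod[OF phi]) (use coeff var p in auto)
  then show "\<exists>q\<in>polys_in n. g t dvd d - peval g zh q"
    using p x by (blast intro: dvd_diff_trans)
qed

end
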